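(* Let $(X,d,\mu)$ be a space of homogeneous type, let $p(\cdot)\in\mathrm{LH}$ and let $w\in A_{p(\cdot)}$. Then there exists a constant $C_0$ depending on $p(\cdot)$, $w$ and $X$ such that for all balls $B$, \[ \|w\chi_B\|_{p(\cdot)}^{\,p_-(B)-p_+(B)}\le C_0. \]
   Context: A space of homogeneous type $(X,d,\mu)$: $X$ nonempty, $d$ a quasi-metric ($d(x,y)=0$ iff $x=y$, symmetric, $d(x,y)\le A_0(d(x,z)+d(z,y))$ for some $A_0\ge1$), $\mu$ a regular measure on the $\sigma$-algebra generated by balls $B(x,r)=\{y:d(x,y)<r\}$ and open sets, with $0<\mu(B(x,2r))\le C_\mu\mu(B(x,r))<\infty$. An exponent is a measurable $p:X\to[1,\infty]$; $p_-(E)=\operatorname{ess\,inf}_E p$, $p_+(E)=\operatorname{ess\,sup}_E p$. With $X_\infty=\{p=\infty\}$, $\rho_{p(\cdot)}(f)=\int_{X\setminus X_\infty}|f(x)|^{p(x)}d\mu+\|f\|_{L^\infty(X_\infty)}$ and $\|f\|_{p(\cdot)}=\inf\{\lambda>0:\rho_{p(\cdot)}(f/\lambda)\le1\}$; $p'(x)=p(x)/(p(x)-1)$ (with $1/0=\infty$, $1/\infty=0$). $p(\cdot)\in\mathrm{LH}_0$ if there is $C_0$ with $|p(x)-p(y)|<-C_0/\log d(x,y)$ whenever $d(x,y)<1/2$; $p(\cdot)\in\mathrm{LH}_\infty$ if there are constants $C_\infty,p_\infty$ with $|p(x)-p_\infty|<C_\infty/\log(e+d(x,x_0))$ for all $x$,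 for a fixed base point $x_0$ (choice irrelevant); $\mathrm{LH}=\mathrm{LH}_0\cap\mathrm{LH}_\infty$. A weight is a locally integrable $w:X\to[0,\infty]$ with $0<w<\infty$ a.e.; $w\in A_{p(\cdot)}$ means there is $K$ with $\|w\chi_B\|_{p(\cdot)}\|w^{-1}\chi_B\|_{p'(\cdot)}\le K\mu(B)$ for every ball $B$. *)

theory Defs
  imports "HOL-Analysis.Analysis"
begin

definition qball :: "('a \<Rightarrow> 'a \<Rightarrow> real) \<Rightarrow> 'a \<Rightarrow> real \<Rightarrow> 'a set" where
  "qball d x r = {y. d x y < r}"

definition qopen :: "('a \<Rightarrow> 'a \<Rightarrow> real) \<Rightarrow> 'a set \<Rightarrow> bool" where
  "qopen d U \<longleftrightarrow> (\<forall>x\<in>U. \<exists>r>0. qball d x r \<subseteq> U)"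

definition quasi_metric :: "('a \<Rightarrow> 'a \<Rightarrow> real) \<Rightarrow> bool" where
  "quasi_metric d \<longleftrightarrow>
     (\<forall>x y. 0 \<le> d x y) \<and> (\<forall>x y. d x y = 0 \<longleftrightarrow> x = y) \<and> (\<forall>x y. d x y = d y x) \<and>
     (\<exists>A0\<ge>1. \<forall>x y z. d x y \<le> A0 * (d x z + d z y))"

definition outer_regular :: "('a \<Rightarrow> 'a \<Rightarrow> real) \<Rightarrow> 'a measure \<Rightarrow> bool" where
  "outer_regular d M \<longleftrightarrow>
     (\<forall>E\<in>sets M. emeasure M E = (INF U\<in>{U. qopen d U \<and> E \<subseteq> U}. emeasure M U))"

definition homogeneous_type :: "('a \<Rightarrow> 'a \<Rightarrow> real) \<Rightarrow> 'a measure \<Rightarrow> bool" where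
  "homogeneous_type d M \<longleftrightarrow>
     quasi_metric d \<and> space M = UNIV \<and>
     sets M = sigma_sets UNIV ({qball d x r | x r. True} \<union> {U. qopen d U}) \<and>
     outer_regular d M \<and>
     (\<exists>C\<mu>::real. \<forall>x r. r > 0 \<longrightarrow>
        0 < emeasure M (qball d x (2 * r)) \<and>
        emeasure M (qball d x (2 * r)) \<le> ennreal C\<mu> * emeasure M (qball d x r) \<and>
        emeasure M (qball d x r) < \<infinity>)"

definition exponent :: "'a measure \<Rightarrow> ('a \<Rightarrow> ereal) \<Rightarrow> bool" where
  "exponent M p \<longleftrightarrow> p \<in> borel_measurable M \<and> (\<forall>x. 1 \<le> p x)"

definition p_minus :: "'a measure \<Rightarrow> ('a \<Rightarrow> ereal) \<Rightarrow> 'a set \<Rightarrow> ereal" where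
  "p_minus M p E = Sup {c. AE x in M. x \<in> E \<longrightarrow> c \<le> p x}"

definition p_plus :: "'a measure \<Rightarrow> ('a \<Rightarrow> ereal) \<Rightarrow> 'a set \<Rightarrow> ereal" where
  "p_plus M p E = Inf {c. AE x in M. x \<in> E \<longrightarrow> p x \<le> c}"

definition Linf_on :: "'a measure \<Rightarrow> 'a set \<Rightarrow> ('a \<Rightarrow> real) \<Rightarrow> ennreal" where
  "Linf_on M E f = Inf {c. AE x in M. x \<in> E \<longrightarrow> ennreal \<bar>f x\<bar> \<le> c}"

definition modular :: "'a measure \<Rightarrow> ('a \<Rightarrow> ereal) \<Rightarrow> ('a \<Rightarrow> real) \<Rightarrow> ennreal" where
  "modular M p f =
     (\<integral>\<^sup>+ x. (if p x = \<infinity> then 0 else ennreal (\<bar>f x\<bar> powr real_of_ereal (p x))) \<partial>M)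
     + Linf_on M {x. p x = \<infinity>} f"

text \<open>Luxemburg norm (value \<infinity> if no admissible \<lambda> exists).\<close>
definition vnorm :: "'a measure \<Rightarrow> ('a \<Rightarrow> ereal) \<Rightarrow> ('a \<Rightarrow> real) \<Rightarrow> ennreal" where
  "vnorm M p f = Inf (ennreal ` {t::real. 0 < t \<and> modular M p (\<lambda>x. f x / t) \<le> 1})"

definition conj_exp :: "('a \<Rightarrow> ereal) \<Rightarrow> 'a \<Rightarrow> ereal" where
  "conj_exp p x = (if p x = 1 then \<infinity> else if p x = \<infinity> then 1
                   else ereal (real_of_ereal (p x) / (real_of_ereal (p x) - 1)))"

definition LH0 :: "('a \<Rightarrow> 'a \<Rightarrow> real) \<Rightarrow> ('a \<Rightarrow> ereal) \<Rightarrow> bool" where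
  "LH0 d p \<longleftrightarrow> (\<exists>C0. \<forall>x y. 0 < d x y \<and> d x y < 1/2 \<longrightarrow>
      \<bar>p x - p y\<bar> < ereal (- C0 / ln (d x y)))"

definition LHinf :: "('a \<Rightarrow> 'a \<Rightarrow> real) \<Rightarrow> ('a \<Rightarrow> ereal) \<Rightarrow> bool" where
  "LHinf d p \<longleftrightarrow> (\<exists>x0. \<exists>Cinf pinf::real. \<forall>x.
      \<bar>p x - ereal pinf\<bar> < ereal (Cinf / ln (exp 1 + d x x0)))"

definition LH :: "('a \<Rightarrow> 'a \<Rightarrow> real) \<Rightarrow> ('a \<Rightarrow> ereal) \<Rightarrow> bool" where
  "LH d p \<longleftrightarrow> LH0 d p \<and> LHinf d p"

definition weight :: "('a \<Rightarrow> 'a \<Rightarrow> real) \<Rightarrow> 'a measure \<Rightarrow> ('a \<Rightarrow> real) \<Rightarrow> bool" where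
  "weight d M w \<longleftrightarrow> w \<in> borel_measurable M \<and> (\<forall>x. 0 \<le> w x) \<and> (AE x in M. 0 < w x) \<and>
     (\<forall>x r. (\<integral>\<^sup>+ y\<in>qball d x r. ennreal (w y) \<partial>M) < \<infinity>)"

definition Ap_var :: "('a \<Rightarrow> 'a \<Rightarrow> real) \<Rightarrow> 'a measure \<Rightarrow> ('a \<Rightarrow> ereal) \<Rightarrow> ('a \<Rightarrow> real) \<Rightarrow> bool" where
  "Ap_var d M p w \<longleftrightarrow> weight d M w \<and>
     (\<exists>K::real. \<forall>x r. 0 < r \<longrightarrow>
        vnorm M p (\<lambda>y. w y * indicator (qball d x r) y)
        * vnorm M (conj_exp p) (\<lambda>y. inverse (w y) * indicator (qball d x r) y)
        \<le> ennreal K * emeasure M (qball d x r))"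

end

theory Submission
  imports Defs
begin

(* Fix a ball B = B(x,r) and let B' = B(x,R) with R = A (d(x,x0) + 1) + r, a ball that contains
   both B and the unit ball around the base point x0, so that ||w chi_B'|| >= eta := ||w chi_B(x0,1)|| > 0.
   Hoelder's inequality on B and the A_p(.) condition on B' give
     mu(B) <= 2 ||w chi_B|| ||w^-1 chi_B'||_p' <= 2 K ||w chi_B|| mu(B') / eta,
   a lower bound c mu(B) / mu(B') for ||w chi_B||.  Raised to the nonpositive power p_-(B) - p_+(B),
   it leaves the factor (mu(B') / mu(B))^(p_+(B) - p_-(B)).  By doubling this is at most
   C^((p_+(B) - p_-(B)) (1 + log_2 (R / r))), and the log-Hoelder conditions (LH_0 for small balls,
   LH_inf for balls far from x0) bound (p_+(B) - p_-(B)) log (R / r) uniformly in x and r. *)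

section \<open>Luxemburg norm and Hoelder's inequality\<close>

lemma modular_mono:
  assumes p1: "\<And>x. 1 \<le> p x" and fg: "\<And>x. \<bar>f x\<bar> \<le> \<bar>g x\<bar>"
  shows "modular M p f \<le> modular M p g"
proof -
  have "(\<integral>\<^sup>+ x. (if p x = \<infinity> then 0 else ennreal (\<bar>f x\<bar> powr real_of_ereal (p x))) \<partial>M)
     \<le> (\<integral>\<^sup>+ x. (if p x = \<infinity> then 0 else ennreal (\<bar>g x\<bar> powr real_of_ereal (p x))) \<partial>M)"
  proof (rule nn_integral_mono)
    fix x
    have "0 \<le> real_of_ereal (p x)" using p1[of x] by (cases "p x") auto
    then show "(if p x = \<infinity> then 0 else ennreal (\<bar>f x\<bar> powr real_of_ereal (p x)))
       \<le> (if p x = \<infinity> then 0 else ennreal (\<bar>g x\<bar> powr real_of_ereal (p x)))"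
      using fg[of x] by (auto intro!: ennreal_leI powr_mono2)
  qed
  moreover have "Linf_on M {x. p x = \<infinity>} f \<le> Linf_on M {x. p x = \<infinity>} g"
    unfolding Linf_on_def
    by (auto intro!: Inf_superset_mono elim!: eventually_mono intro: order_trans[OF ennreal_leI[OF fg]])
  ultimately show ?thesis unfolding modular_def by (rule add_mono)
qed

lemma vnorm_mono:
  assumes p1: "\<And>x. 1 \<le> p x" and fg: "\<And>x. \<bar>f x\<bar> \<le> \<bar>g x\<bar>"
  shows "vnorm M p f \<le> vnorm M p g"
  unfolding vnorm_def
proof (rule Inf_superset_mono, rule image_mono, safe)
  fix t :: real assume t: "0 < t" "modular M p (\<lambda>x. g x / t) \<le> 1"
  have "modular M p (\<lambda>x. f x / t) \<le> modular M p (\<lambda>x. g x / t)"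
    using t(1) fg by (intro modular_mono[OF p1]) (simp add: divide_right_mono)
  with t(2) show "modular M p (\<lambda>x. f x / t) \<le> 1" by simp
qed

lemma modular_divide_le_1_if_vnorm_less:
  assumes p1: "\<And>x. 1 \<le> p x" and less: "vnorm M p f < ennreal a"
  shows "modular M p (\<lambda>x. f x / a) \<le> 1"
proof -
  from less obtain t where t: "0 < t" "modular M p (\<lambda>x. f x / t) \<le> 1" "ennreal t < ennreal a"
    unfolding vnorm_def by (auto simp: Inf_less_iff)
  then have "t < a" by (simp add: ennreal_less_iff)
  then have "modular M p (\<lambda>x. f x / a) \<le> modular M p (\<lambda>x. f x / t)"
    using t(1) by (intro modular_mono[OF p1]) (simp add: abs_divide divide_left_mono)
  with t(2) show ?thesis by simp
qed

lemma Linf_on_empty: "Linf_on M {} f = 0"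
  unfolding Linf_on_def by (simp add: bot_ennreal)

lemma modular_finite_exponent:
  assumes "\<And>x. p x \<noteq> \<infinity>"
  shows "modular M p f = (\<integral>\<^sup>+x. ennreal (\<bar>f x\<bar> powr real_of_ereal (p x)) \<partial>M)"
  using assms by (simp add: modular_def Linf_on_empty)

lemma AE_abs_le_1_if_Linf_on_le_1:
  assumes "Linf_on M E f \<le> 1"
  shows "AE x in M. x \<in> E \<longrightarrow> \<bar>f x\<bar> \<le> 1"
proof -
  have "AE x in M. x \<in> E \<longrightarrow> ennreal \<bar>f x\<bar> \<le> 1 + ennreal (1 / Suc n)" for n
  proof -
    have "Linf_on M E f < 1 + ennreal (1 / Suc n)"
      using assms by (rule le_less_trans) (simp add: ennreal_zero_less_divide)
    then obtain c where "AE x in M. x \<in> E \<longrightarrow> ennreal \<bar>f x\<bar> \<le> c" "c < 1 + ennreal (1 / Suc n)"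
      unfolding Linf_on_def by (auto simp: Inf_less_iff)
    then show ?thesis by (auto elim: eventually_mono)
  qed
  then have "AE x in M. \<forall>n. x \<in> E \<longrightarrow> ennreal \<bar>f x\<bar> \<le> 1 + ennreal (1 / Suc n)"
    by (subst AE_all_countable) blast
  then show ?thesis
  proof (rule eventually_mono, intro impI)
    fix x assume x: "\<forall>n. x \<in> E \<longrightarrow> ennreal \<bar>f x\<bar> \<le> 1 + ennreal (1 / Suc n)" and "x \<in> E"
    have "ennreal \<bar>f x\<bar> \<le> 1"
    proof (rule ennreal_le_epsilon)
      fix e :: real assume "0 < e"
      then obtain n where "1 / Suc n < e" using nat_approx_posE by blast
      then have "1 + ennreal (1 / Suc n) \<le> 1 + ennreal e" by (intro add_left_mono ennreal_leI) simp
      with x \<open>x \<in> E\<close> show "ennreal \<bar>f x\<bar> \<le> 1 + ennreal e" by (meson order_trans)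
    qed
    then show "\<bar>f x\<bar> \<le> 1" by simp
  qed
qed

lemma conj_exp_ge_1: assumes "\<And>x. 1 \<le> p x" shows "1 \<le> conj_exp p x"
proof -
  consider "p x = 1" | "p x = \<infinity>" | r where "p x = ereal r" "1 < r"
    using assms[of x] by (cases "p x") (fastforce simp: one_ereal_def)+
  then show ?thesis
  proof cases
    case 3
    then have "1 \<le> r / (r - 1)" by (simp add: field_simps)
    with 3 show ?thesis unfolding conj_exp_def by (simp add: one_ereal_def)
  qed (auto simp: conj_exp_def)
qed

lemma abs_mult_le_powr_add_powr_conj:
  fixes a b q :: real
  assumes q: "1 < q"
  shows "\<bar>a * b\<bar> \<le> \<bar>a\<bar> powr q + \<bar>b\<bar> powr (q / (q - 1))"
proof -
  define q' where "q' = q / (q - 1)"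
  have q': "1 < q'" "1 / q + 1 / q' = 1" unfolding q'_def using q by (simp_all add: field_simps)
  have "\<bar>a * b\<bar> \<le> \<bar>a\<bar> powr q / q + \<bar>b\<bar> powr q' / q'"
    using Youngs_inequality[OF q q'(1) q'(2), of "\<bar>a\<bar>" "\<bar>b\<bar>"] by (simp add: abs_mult)
  also have "\<dots> \<le> \<bar>a\<bar> powr q + \<bar>b\<bar> powr q'"
    using q q'(1) by (intro add_mono) (auto simp: divide_le_eq mult_le_cancel_left1)
  finally show ?thesis unfolding q'_def .
qed

lemma hoelder_modular:
  assumes p1: "\<And>x. 1 \<le> p x" and pfin: "\<And>x. p x \<noteq> \<infinity>" and pm: "p \<in> borel_measurable M"
    and Fm: "F \<in> borel_measurable M" and Gm: "G \<in> borel_measurable M"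
    and mF: "modular M p F \<le> 1" and mG: "modular M (conj_exp p) G \<le> 1"
  shows "(\<integral>\<^sup>+x. ennreal \<bar>F x * G x\<bar> \<partial>M) \<le> 2"
proof -
  define q where "q x = real_of_ereal (p x)" for x
  have pq: "p x = ereal (q x)" for x
    using p1[of x] pfin[of x] unfolding q_def by (cases "p x") auto
  have q1: "1 \<le> q x" for x using p1[of x] unfolding pq by simp
  have qm: "q \<in> borel_measurable M" unfolding q_def using pm by measurable
  define h where "h x = (if q x = 1 then 0 else ennreal (\<bar>G x\<bar> powr (q x / (q x - 1))))" for x
  have hm: "h \<in> borel_measurable M" unfolding h_def using Gm qm by measurable
  have IF: "(\<integral>\<^sup>+x. ennreal (\<bar>F x\<bar> powr q x) \<partial>M) \<le> 1"
    using mF by (simp add: modular_finite_exponent[OF pfin] q_def)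
  have "(if conj_exp p x = \<infinity> then 0 else ennreal (\<bar>G x\<bar> powr real_of_ereal (conj_exp p x))) = h x" for x
    unfolding h_def conj_exp_def pq by simp
  then have "modular M (conj_exp p) G = (\<integral>\<^sup>+x. h x \<partial>M) + Linf_on M {x. q x = 1} G"
    unfolding modular_def by (simp add: conj_exp_def pq)
  with mG have Ih: "(\<integral>\<^sup>+x. h x \<partial>M) \<le> 1" and IL: "Linf_on M {x. q x = 1} G \<le> 1"
    by (auto intro: order_trans[rotated])
  \<comment> \<open>Young's inequality where p > 1; where p = 1, the conjugate exponent is infinite and
    the L-infinity part of the modular gives |G| <= 1 a.e.\<close>
  have "(\<integral>\<^sup>+x. ennreal \<bar>F x * G x\<bar> \<partial>M) \<le> (\<integral>\<^sup>+x. ennreal (\<bar>F x\<bar> powr q x) + h x \<partial>M)"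
    using AE_abs_le_1_if_Linf_on_le_1[OF IL]
  proof (intro nn_integral_mono_AE, eventually_elim)
    case (elim x)
    show ?case
    proof (cases "q x = 1")
      case True
      then have "\<bar>F x * G x\<bar> \<le> \<bar>F x\<bar> powr q x"
        using elim by (simp add: abs_mult mult_left_le)
      then show ?thesis unfolding h_def using True by (simp add: ennreal_leI)
    next
      case False
      with q1[of x] have "1 < q x" by simp
      from abs_mult_le_powr_add_powr_conj[OF this] show ?thesis
        unfolding h_def using False by (simp flip: ennreal_plus add: ennreal_leI)
    qed
  qed
  also have "\<dots> = (\<integral>\<^sup>+x. ennreal (\<bar>F x\<bar> powr q x) \<partial>M) + (\<integral>\<^sup>+x. h x \<partial>M)"
    using Fm qm hm by (intro nn_integral_add) auto
  also have "\<dots> \<le> 1 + 1" using IF Ih by (rule add_mono)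
  finally show ?thesis by simp
qed

lemma hoelder_vnorm:
  assumes p1: "\<And>x. 1 \<le> p x" and pfin: "\<And>x. p x \<noteq> \<infinity>" and pm: "p \<in> borel_measurable M"
    and fm: "f \<in> borel_measurable M" and gm: "g \<in> borel_measurable M"
    and a: "0 < a" and b: "0 < b"
    and fa: "vnorm M p f < ennreal a" and gb: "vnorm M (conj_exp p) g < ennreal b"
  shows "(\<integral>\<^sup>+x. ennreal \<bar>f x * g x\<bar> \<partial>M) \<le> ennreal (2 * a * b)"
proof -
  have "(\<integral>\<^sup>+x. ennreal \<bar>f x / a * (g x / b)\<bar> \<partial>M) \<le> 2"
    using fm gm
    by (intro hoelder_modular[OF p1 pfin pm]
        modular_divide_le_1_if_vnorm_less[OF p1 fa]
        modular_divide_le_1_if_vnorm_less[OF conj_exp_ge_1[OF p1] gb]) auto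
  moreover have "(\<integral>\<^sup>+x. ennreal \<bar>f x * g x\<bar> \<partial>M)
      = ennreal (a * b) * (\<integral>\<^sup>+x. ennreal \<bar>f x / a * (g x / b)\<bar> \<partial>M)"
    using a b fm gm
    by (subst nn_integral_cmult[symmetric]) (auto intro!: nn_integral_cong simp: abs_mult simp flip: ennreal_mult)
  ultimately have "(\<integral>\<^sup>+x. ennreal \<bar>f x * g x\<bar> \<partial>M) \<le> ennreal (a * b) * 2"
    by (simp add: mult_left_mono)
  also have "\<dots> = ennreal (2 * a * b)" using a b by (simp add: ennreal_mult mult_ac)
  finally show ?thesis .
qed

lemma le_powr_add_1:
  fixes x q :: real
  assumes "0 \<le> x" "1 \<le> q"
  shows "x \<le> x powr q + 1"
proof (cases "1 \<le> x")
  case True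
  then have "x powr 1 \<le> x powr q" using assms by (intro powr_mono) auto
  with True show ?thesis by simp
qed (use powr_ge_zero[of x q] in linarith)

lemma nn_integral_min_weight_le_if_vnorm_less:
  assumes p1: "\<And>x. 1 \<le> p x" and pfin: "\<And>x. p x \<noteq> \<infinity>" and pm: "p \<in> borel_measurable M"
    and wm: "w \<in> borel_measurable M" and w0: "\<And>x. 0 \<le> w x" and B: "B \<in> sets M"
    and t: "0 < t" and less: "vnorm M p (\<lambda>y. w y * indicator B y) < ennreal t"
  shows "ennreal (1 / t) * (\<integral>\<^sup>+y. ennreal (min (w y) 1 * indicator B y) \<partial>M) \<le> 1 + emeasure M B"
proof -
  define F where "F y = \<bar>w y * indicator B y / t\<bar> powr real_of_ereal (p y)" for y
  have "modular M p (\<lambda>y. w y * indicator B y / t) \<le> 1"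
    using less by (rule modular_divide_le_1_if_vnorm_less[OF p1])
  then have F_le_1: "(\<integral>\<^sup>+y. ennreal (F y) \<partial>M) \<le> 1"
    by (simp add: modular_finite_exponent[OF pfin] F_def)
  have pointwise: "ennreal (min (w y) 1 * indicator B y / t) \<le> ennreal (F y) + indicator B y" for y
  proof (cases "y \<in> B")
    case True
    have "1 \<le> real_of_ereal (p y)" using p1[of y] pfin[of y] by (cases "p y") auto
    then have "w y / t \<le> F y + 1"
      using True w0[of y] t by (simp add: F_def le_powr_add_1)
    moreover have "min (w y) 1 / t \<le> w y / t" using t by (simp add: divide_right_mono)
    ultimately have "ennreal (min (w y) 1 * indicator B y / t) \<le> ennreal (F y + 1)"
      using True by (intro ennreal_leI) simp
    then show ?thesis using True by (simp add: F_def ennreal_plus)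
  qed simp
  have "ennreal (1 / t) * (\<integral>\<^sup>+y. ennreal (min (w y) 1 * indicator B y) \<partial>M)
      = (\<integral>\<^sup>+y. ennreal (min (w y) 1 * indicator B y / t) \<partial>M)"
    using t w0 wm B by (subst nn_integral_cmult[symmetric]) (auto simp flip: ennreal_mult)
  also have "\<dots> \<le> (\<integral>\<^sup>+y. ennreal (F y) + indicator B y \<partial>M)"
    using pointwise by (rule nn_integral_mono)
  also have "\<dots> = (\<integral>\<^sup>+y. ennreal (F y) \<partial>M) + emeasure M B"
    using wm pm B by (subst nn_integral_add) (auto simp: F_def)
  also have "\<dots> \<le> 1 + emeasure M B" using F_le_1 by (rule add_right_mono)
  finally show ?thesis .
qed

lemma vnorm_weight_indicator_nonzero:
  assumes p1: "\<And>x. 1 \<le> p x" and pfin: "\<And>x. p x \<noteq> \<infinity>" and pm: "p \<in> borel_measurable M"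
    and wm: "w \<in> borel_measurable M" and w0: "\<And>x. 0 \<le> w x" and wpos: "AE x in M. 0 < w x"
    and B: "B \<in> sets M" and mB: "0 < emeasure M B" "emeasure M B < \<infinity>"
  shows "vnorm M p (\<lambda>y. w y * indicator B y) \<noteq> 0"
proof
  assume v0: "vnorm M p (\<lambda>y. w y * indicator B y) = 0"
  define I where "I = (\<integral>\<^sup>+y. ennreal (min (w y) 1 * indicator B y) \<partial>M)"
  have "I \<le> (\<integral>\<^sup>+y. indicator B y \<partial>M)" unfolding I_def
    by (intro nn_integral_mono) (auto simp: indicator_def)
  then have IB: "I \<le> emeasure M B" using B by simp
  have "I \<noteq> 0"
  proof
    assume "I = 0"
    then have "AE y in M. ennreal (min (w y) 1 * indicator B y) = 0"
      unfolding I_def using wm B by (simp add: nn_integral_0_iff_AE)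
    then have "AE y in M. y \<notin> B" using wpos by eventually_elim (auto simp: indicator_def)
    then have "emeasure M B = 0" using AE_iff_null_sets[OF B] by blast
    with mB show False by simp
  qed
  then obtain i m where i: "I = ennreal i" "0 < i" and m: "emeasure M B = ennreal m" "0 \<le> m"
    using IB mB by (cases I; cases "emeasure M B") (auto simp: top_unique)
  define t where "t = i / (2 * (1 + m))"
  have t: "0 < t" unfolding t_def using i m by simp
  have "ennreal (1 / t) * I \<le> 1 + emeasure M B"
    unfolding I_def using t v0
    by (intro nn_integral_min_weight_le_if_vnorm_less[OF p1 pfin pm wm w0 B]) auto
  then have "ennreal (i / t) \<le> ennreal (1 + m)" using t i m by (simp add: ennreal_plus flip: ennreal_mult)
  then have "i / t \<le> 1 + m" using m by (subst (asm) ennreal_le_iff) auto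
  moreover have "i / t = 2 * (1 + m)" unfolding t_def using i m by simp
  ultimately show False using m by simp
qed

lemma ennreal_le_divide_if_mult_le:
  assumes \<eta>: "0 < \<eta>" "ennreal \<eta> \<le> a" and c: "0 \<le> c" and ab: "a * b \<le> ennreal c"
  shows "b \<le> ennreal (c / \<eta>)"
proof (cases b)
  case (real n)
  have "ennreal (\<eta> * n) = ennreal \<eta> * b" using \<eta> real by (simp add: ennreal_mult)
  also have "\<dots> \<le> a * b" using \<eta> by (intro mult_right_mono) auto
  also have "\<dots> \<le> ennreal c" by (rule ab)
  finally have "\<eta> * n \<le> c" using c by (simp add: ennreal_le_iff)
  with \<eta> real show ?thesis by (simp add: ennreal_leI pos_le_divide_eq mult.commute)
next
  case top
  have "a \<noteq> 0" using \<eta> by (auto simp: order.antisym)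
  with top ab show ?thesis by (simp add: ennreal_mult_top top_unique)
qed

lemma emeasure_le_vnorm_weight_mult_vnorm_inverse:
  assumes p1: "\<And>x. 1 \<le> p x" and pfin: "\<And>x. p x \<noteq> \<infinity>" and pm: "p \<in> borel_measurable M"
    and wm: "w \<in> borel_measurable M" and wpos: "AE x in M. 0 < w x" and B: "B \<in> sets M"
    and a: "0 < a" "vnorm M p (\<lambda>y. w y * indicator B y) < ennreal a"
    and b: "0 < b" "vnorm M (conj_exp p) (\<lambda>y. inverse (w y) * indicator B y) < ennreal b"
  shows "emeasure M B \<le> ennreal (2 * a * b)"
proof -
  have "(\<integral>\<^sup>+x. ennreal \<bar>w x * indicator B x * (inverse (w x) * indicator B x)\<bar> \<partial>M)
      = (\<integral>\<^sup>+x. indicator B x \<partial>M)"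
    using wpos by (intro nn_integral_cong_AE) (auto elim!: eventually_mono simp: indicator_def)
  also have "\<dots> = emeasure M B" using B by simp
  finally show ?thesis
    using hoelder_vnorm[OF p1 pfin pm _ _ a(1) b(1) a(2) b(2)] wm B by simp
qed

text \<open>The factor 4 instead of Hoelder's 2 absorbs the strict inequalities required by
  hoelder_vnorm.\<close>

lemma measure_le_4_mult_vnorm_weight:
  assumes p1: "\<And>x. 1 \<le> p x" and pfin: "\<And>x. p x \<noteq> \<infinity>" and pm: "p \<in> borel_measurable M"
    and wm: "w \<in> borel_measurable M" and wpos: "AE x in M. 0 < w x"
    and B: "B \<in> sets M" and B_fin: "emeasure M B < \<infinity>"
    and fin: "vnorm M p (\<lambda>y. w y * indicator B y) < \<infinity>"
    and \<beta>: "0 < \<beta>" "vnorm M (conj_exp p) (\<lambda>y. inverse (w y) * indicator B y) \<le> ennreal \<beta>"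
  shows "measure M B \<le> 4 * \<beta> * enn2real (vnorm M p (\<lambda>y. w y * indicator B y))"
    (is "_ \<le> _ * ?N")
proof -
  have N: "vnorm M p (\<lambda>y. w y * indicator B y) = ennreal ?N" using fin by (simp add: less_top)
  have "measure M B / (4 * \<beta>) \<le> ?N"
  proof (rule dense_ge)
    fix a assume a: "?N < a"
    then have a0: "0 < a" using enn2real_nonneg le_less_trans by blast
    have "vnorm M p (\<lambda>y. w y * indicator B y) < ennreal a"
      by (subst N) (rule ennreal_lessI[OF a0 a])
    moreover have "vnorm M (conj_exp p) (\<lambda>y. inverse (w y) * indicator B y) < ennreal (2 * \<beta>)"
      using \<beta> by (auto intro: le_less_trans simp: ennreal_less_iff)
    ultimately have "emeasure M B \<le> ennreal (2 * a * (2 * \<beta>))"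
      using a0 \<beta> by (intro emeasure_le_vnorm_weight_mult_vnorm_inverse[OF p1 pfin pm wm wpos B]) auto
    then have "measure M B \<le> 2 * a * (2 * \<beta>)"
      using a0 \<beta> B_fin by (simp add: emeasure_eq_ennreal_measure less_top ennreal_le_iff)
    then show "measure M B / (4 * \<beta>) \<le> a" using \<beta> by (simp add: field_simps)
  qed
  then show ?thesis using \<beta> by (simp add: field_simps)
qed

lemma vnorm_weight_indicator_lower_bound:
  assumes p1: "\<And>x. 1 \<le> p x" and pfin: "\<And>x. p x \<noteq> \<infinity>" and pm: "p \<in> borel_measurable M"
    and wm: "w \<in> borel_measurable M" and wpos: "AE x in M. 0 < w x"
    and B: "B \<in> sets M" and B': "B' \<in> sets M" and BB': "B \<subseteq> B'" and B'_fin: "emeasure M B' < \<infinity>"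
    and \<eta>: "0 < \<eta>" "ennreal \<eta> \<le> vnorm M p (\<lambda>y. w y * indicator B' y)"
    and K: "0 < K"
    and Ap: "vnorm M p (\<lambda>y. w y * indicator B' y) * vnorm M (conj_exp p) (\<lambda>y. inverse (w y) * indicator B' y)
        \<le> ennreal K * emeasure M B'"
    and fin: "vnorm M p (\<lambda>y. w y * indicator B y) < \<infinity>"
  shows "\<eta> * measure M B / (4 * K * measure M B') \<le> enn2real (vnorm M p (\<lambda>y. w y * indicator B y))"
proof (cases "measure M B' = 0")
  case False
  define \<beta> where "\<beta> = K * measure M B' / \<eta>"
  have "0 < measure M B'" using False measure_nonneg[of M B'] by linarith
  then have \<beta>0: "0 < \<beta>" unfolding \<beta>_def using \<eta> K by simp
  have "vnorm M (conj_exp p) (\<lambda>y. inverse (w y) * indicator B y)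
      \<le> vnorm M (conj_exp p) (\<lambda>y. inverse (w y) * indicator B' y)"
    using BB' by (intro vnorm_mono conj_exp_ge_1 p1) (auto simp: indicator_def)
  also have "\<dots> \<le> ennreal \<beta>"
    unfolding \<beta>_def using \<eta> K Ap B'_fin
    by (intro ennreal_le_divide_if_mult_le) (auto simp: emeasure_eq_ennreal_measure less_top ennreal_mult)
  finally have "measure M B \<le> 4 * \<beta> * enn2real (vnorm M p (\<lambda>y. w y * indicator B y))"
    using B'_fin emeasure_mono[OF BB' B'] \<beta>0 fin
    by (intro measure_le_4_mult_vnorm_weight[OF p1 pfin pm wm wpos B]) auto
  then show ?thesis unfolding \<beta>_def using \<eta> K \<open>0 < measure M B'\<close> by (simp add: field_simps)
qed simp

section \<open>Essential range of the exponent and doubling\<close>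

lemma p_minus_p_plus_bounds:
  fixes q :: "'a \<Rightarrow> real"
  assumes pq: "\<And>x. p x = ereal (q x)" and q1: "\<And>x. 1 \<le> q x" and qP: "\<And>x. q x \<le> P"
    and E: "E \<in> sets M" and mE: "emeasure M E \<noteq> 0"
  shows "1 \<le> real_of_ereal (p_minus M p E)"
    and "real_of_ereal (p_minus M p E) \<le> real_of_ereal (p_plus M p E)"
    and "real_of_ereal (p_plus M p E) \<le> P"
    and "\<And>\<eta>. (\<And>y z. y \<in> E \<Longrightarrow> z \<in> E \<Longrightarrow> q y - q z \<le> \<eta>) \<Longrightarrow>
           real_of_ereal (p_plus M p E) - real_of_ereal (p_minus M p E) \<le> \<eta>"
proof -
  define Lo where "Lo = {c. AE x in M. x \<in> E \<longrightarrow> c \<le> p x}"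
  define Up where "Up = {c. AE x in M. x \<in> E \<longrightarrow> p x \<le> c}"
  have pmi: "p_minus M p E = Sup Lo" unfolding p_minus_def Lo_def ..
  have ppl: "p_plus M p E = Inf Up" unfolding p_plus_def Up_def ..
  have sep: "c1 \<le> c2" if "c1 \<in> Lo" "c2 \<in> Up" for c1 c2
  proof (rule ccontr)
    assume "\<not> c1 \<le> c2"
    with that have "AE x in M. x \<notin> E"
      unfolding Lo_def Up_def by (auto elim: eventually_mono[OF eventually_conj] dest: order_trans)
    then have "emeasure M E = 0" using AE_iff_null_sets[OF E] by blast
    with mE show False by simp
  qed
  have a1: "1 \<le> Sup Lo" using q1 pq by (intro Sup_upper) (simp add: Lo_def)
  have a2: "Sup Lo \<le> Inf Up" by (rule Sup_least, rule Inf_greatest) (rule sep)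
  have a3: "Inf Up \<le> ereal P" using qP pq by (intro Inf_lower) (simp add: Up_def)
  obtain a b where a: "Sup Lo = ereal a" and b: "Inf Up = ereal b"
    using a1 a2 a3 by (cases "Sup Lo"; cases "Inf Up") auto
  show "1 \<le> real_of_ereal (p_minus M p E)" using a1 a pmi by simp
  show "real_of_ereal (p_minus M p E) \<le> real_of_ereal (p_plus M p E)" using a2 a b pmi ppl by simp
  show "real_of_ereal (p_plus M p E) \<le> P" using a3 b ppl by simp
  fix \<eta> assume osc: "\<And>y z. y \<in> E \<Longrightarrow> z \<in> E \<Longrightarrow> q y - q z \<le> \<eta>"
  have "b \<le> q z + \<eta>" if "z \<in> E" for z
  proof -
    have "ereal (q z + \<eta>) \<in> Up" unfolding Up_def using osc[OF _ that] pq
      by (auto intro!: AE_I2 simp: algebra_simps)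
    then show ?thesis using b by (metis Inf_lower ereal_less_eq(3))
  qed
  then have "ereal (b - \<eta>) \<in> Lo" unfolding Lo_def using pq by (auto intro!: AE_I2 simp: algebra_simps)
  then have "ereal (b - \<eta>) \<le> Sup Lo" by (rule Sup_upper)
  then show "real_of_ereal (p_plus M p E) - real_of_ereal (p_minus M p E) \<le> \<eta>"
    using a b pmi ppl by simp
qed

lemma qball_mono: "r \<le> R \<Longrightarrow> qball d x r \<subseteq> qball d x R"
  unfolding qball_def by auto

lemma emeasure_qball_pow2_le:
  assumes dbl: "\<And>x r. 0 < r \<Longrightarrow> emeasure M (qball d x (2 * r)) \<le> ennreal C * emeasure M (qball d x r)"
    and C1: "1 \<le> C" and r: "0 < r"
  shows "emeasure M (qball d x (2^k * r)) \<le> ennreal (C^k) * emeasure M (qball d x r)"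
proof (induction k)
  case (Suc k)
  have "emeasure M (qball d x (2^Suc k * r)) = emeasure M (qball d x (2 * (2^k * r)))"
    by (simp add: mult_ac)
  also have "\<dots> \<le> ennreal C * emeasure M (qball d x (2^k * r))" using r by (intro dbl) simp
  also have "\<dots> \<le> ennreal C * (ennreal (C^k) * emeasure M (qball d x r))"
    using Suc by (intro mult_left_mono) auto
  also have "\<dots> = ennreal (C^Suc k) * emeasure M (qball d x r)"
    using C1 by (simp add: ennreal_mult mult_ac)
  finally show ?case .
qed simp

lemma ln_measure_qball_ratio_le:
  assumes dbl: "\<And>x r. 0 < r \<Longrightarrow> emeasure M (qball d x (2 * r)) \<le> ennreal C * emeasure M (qball d x r)"
    and C1: "1 \<le> C"
    and fin: "\<And>x r. 0 < r \<Longrightarrow> 0 < emeasure M (qball d x r) \<and> emeasure M (qball d x r) < \<infinity>"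
    and sets: "\<And>x r. qball d x r \<in> sets M"
    and r: "0 < r" and rR: "r \<le> R"
  shows "ln (measure M (qball d x R) / measure M (qball d x r)) \<le> ln C * (1 + log 2 (R / r))"
proof -
  define k where "k = nat \<lceil>log 2 (R / r)\<rceil>"
  have Rr: "1 \<le> R / r" using r rR by simp
  have "log 2 (R / r) \<le> real k" unfolding k_def by linarith
  then have "R / r \<le> 2 powr real k" using Rr by (subst (asm) log_le_iff) auto
  then have R_le: "R \<le> 2^k * r" using r by (simp add: powr_realpow divide_le_eq)
  have R0: "0 < R" using r rR by simp
  have "emeasure M (qball d x R) \<le> emeasure M (qball d x (2^k * r))"
    using R_le sets by (intro emeasure_mono qball_mono) auto
  also have "\<dots> \<le> ennreal (C^k) * emeasure M (qball d x r)" by (rule emeasure_qball_pow2_le[OF dbl C1 r])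
  finally have le: "emeasure M (qball d x R) \<le> ennreal (C^k) * emeasure M (qball d x r)" .
  have mR: "0 < measure M (qball d x R)" and mr: "0 < measure M (qball d x r)"
    using fin[OF R0, of x] fin[OF r, of x] by (auto simp: measure_def enn2real_positive_iff less_top)
  have "measure M (qball d x R) \<le> C^k * measure M (qball d x r)"
    using le fin[OF R0, of x] fin[OF r, of x] C1
    by (simp add: emeasure_eq_ennreal_measure less_top ennreal_mult[symmetric] del: ennreal_mult)
  then have "ln (measure M (qball d x R) / measure M (qball d x r)) \<le> ln (C^k)"
    using mr mR C1 by (simp add: divide_le_eq)
  also have "\<dots> = real k * ln C" using C1 by (simp add: ln_realpow)
  also have "\<dots> \<le> (1 + log 2 (R / r)) * ln C"
    using C1 Rr by (intro mult_right_mono) (auto simp: k_def intro: order_trans[OF of_int_ceiling_le_add_one])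
  finally show ?thesis by (simp add: mult_ac)
qed

section \<open>Log-Hoelder exponents on quasi-metric spaces\<close>

lemma one_le_ln_exp_1_add:
  fixes t :: real
  assumes "0 \<le> t"
  shows "1 \<le> ln (exp 1 + t)"
  using assms by (subst ln_ge_iff) (auto intro: add_pos_nonneg)

lemma ln_1_add_mult_div_le:
  fixes A D r :: real
  assumes "1 \<le> A" "0 \<le> D" "0 < r" "r \<le> D + 1"
  shows "ln (1 + A * (D + 1) / r) \<le> ln (1 + A) + ln (D + 1) - ln r"
proof -
  have "1 + A * (D + 1) / r \<le> (D + 1) / r + A * (D + 1) / r" using assms by simp
  also have "\<dots> = (1 + A) * (D + 1) / r" by (simp add: add_divide_distrib distrib_right)
  finally have "ln (1 + A * (D + 1) / r) \<le> ln ((1 + A) * (D + 1) / r)"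
    using assms by (subst ln_le_cancel_iff) (auto intro: add_pos_nonneg)
  also have "\<dots> = ln (1 + A) + ln (D + 1) - ln r" using assms by (simp add: ln_div ln_mult)
  finally show ?thesis .
qed

locale qmetric_space =
  fixes d :: "'a \<Rightarrow> 'a \<Rightarrow> real" and A :: real
  assumes A_ge_1: "1 \<le> A" and quasi_triangle: "\<And>x y z. d x y \<le> A * (d x z + d z y)"
    and d_sym: "\<And>x y. d x y = d y x" and d_nonneg: "\<And>x y. 0 \<le> d x y"
    and d_eq_0D: "\<And>x y. d x y = 0 \<Longrightarrow> x = y"

locale log_hoelder_exponent = qmetric_space d A for d :: "'a \<Rightarrow> 'a \<Rightarrow> real" and A +
  fixes q :: "'a \<Rightarrow> real" and C0 Cinf pinf :: real and x0 :: 'a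
  assumes LH0: "\<And>y z. 0 < d y z \<Longrightarrow> d y z < 1/2 \<Longrightarrow> \<bar>q y - q z\<bar> < - C0 / ln (d y z)"
    and LHinf: "\<And>y. \<bar>q y - pinf\<bar> < Cinf / ln (exp 1 + d y x0)"
begin

lemma q_le: "q y \<le> pinf + max Cinf 0"
proof -
  have L: "1 \<le> ln (exp 1 + d y x0)" by (rule one_le_ln_exp_1_add[OF d_nonneg])
  then have "Cinf / ln (exp 1 + d y x0) \<le> max Cinf 0"
    by (cases "Cinf \<le> 0") (auto simp: divide_nonpos_pos divide_le_eq mult_le_cancel_left1)
  with LHinf[of y] show ?thesis by linarith
qed

lemma osc_small_ball:
  assumes r: "0 < r" "r < 1 / (4 * A^2)" and y: "y \<in> qball d x r" and z: "z \<in> qball d x r"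
  shows "q y - q z \<le> max C0 0 / (- ln (2 * A * r))"
proof -
  have dyz: "d y z < 2 * A * r"
  proof -
    have "d y z \<le> A * (d y x + d x z)" by (rule quasi_triangle)
    also have "\<dots> < A * (r + r)"
      using y z A_ge_1 by (intro mult_strict_left_mono) (auto simp: qball_def d_sym)
    finally show ?thesis by simp
  qed
  have "2 * A * r < 1 / (2 * A)" using r A_ge_1 by (simp add: field_simps power2_eq_square)
  also have "\<dots> \<le> 1/2" using A_ge_1 by (simp add: field_simps)
  finally have small: "2 * A * r < 1/2" .
  then have pos: "0 < - ln (2 * A * r)" using r A_ge_1 by simp
  show ?thesis
  proof (cases "d y z = 0")
    case True
    then have "y = z" by (rule d_eq_0D)
    with pos show ?thesis by (simp add: divide_nonneg_neg)
  next
    case False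
    then have dpos: "0 < d y z" using d_nonneg[of y z] by simp
    have ln_neg: "ln (d y z) < 0" using dpos dyz small by simp
    have "q y - q z < C0 / (- ln (d y z))" using LH0[OF dpos] dyz small by simp
    also have "\<dots> \<le> max C0 0 / (- ln (d y z))" using ln_neg by (intro divide_right_mono) auto
    also have "\<dots> \<le> max C0 0 / (- ln (2 * A * r))"
      using dpos dyz ln_neg pos by (intro divide_left_mono mult_pos_pos) auto
    finally show ?thesis by simp
  qed
qed

lemma far_ball_close_to_pinf:
  assumes r: "0 < r" and far: "4 * A \<le> d x x0" "2 * A * r < d x x0 + 1" and y: "y \<in> qball d x r"
  shows "\<bar>q y - pinf\<bar> \<le> max Cinf 0 / ln (exp 1 + d x x0 / (4 * A))"
proof -
  define D where "D = d x x0"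
  have "D \<le> A * (d x y + d y x0)" unfolding D_def by (rule quasi_triangle)
  also have "\<dots> < A * (r + d y x0)" using y A_ge_1 by (intro mult_strict_left_mono) (auto simp: qball_def)
  finally have "D / A < r + d y x0" using A_ge_1 by (simp add: field_simps)
  moreover have "r < (D + 1) / (2 * A)" using far A_ge_1 unfolding D_def by (simp add: field_simps)
  moreover have "D / (4 * A) \<le> D / A - (D + 1) / (2 * A)"
    using far A_ge_1 unfolding D_def by (simp add: field_simps)
  ultimately have y_far: "D / (4 * A) \<le> d y x0" by linarith
  have D0: "0 \<le> D / (4 * A)" using far A_ge_1 unfolding D_def by simp
  have L1: "1 \<le> ln (exp 1 + D / (4 * A))" by (rule one_le_ln_exp_1_add[OF D0])
  have L2: "ln (exp 1 + D / (4 * A)) \<le> ln (exp 1 + d y x0)"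
    using y_far D0 by (subst ln_le_cancel_iff) (auto intro: add_pos_nonneg)
  have "\<bar>q y - pinf\<bar> < Cinf / ln (exp 1 + d y x0)" by (rule LHinf)
  also have "\<dots> \<le> max Cinf 0 / ln (exp 1 + d y x0)" using L1 L2 by (intro divide_right_mono) auto
  also have "\<dots> \<le> max Cinf 0 / ln (exp 1 + D / (4 * A))"
    using L1 L2 by (intro divide_left_mono) (auto intro!: mult_pos_pos)
  finally show ?thesis unfolding D_def by simp
qed

text \<open>In the next three lemmas \<open>\<delta>\<close> is any number below every bound for the oscillation of q
  on the ball, such as p_+(B) - p_-(B).\<close>

lemma osc_mul_neg_ln_radius_le:
  assumes r: "0 < r" and \<delta>: "0 \<le> \<delta>" "\<delta> \<le> P"
    and osc: "\<And>\<eta>. (\<And>y z. y \<in> qball d x r \<Longrightarrow> z \<in> qball d x r \<Longrightarrow> q y - q z \<le> \<eta>) \<Longrightarrow> \<delta> \<le> \<eta>"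
  shows "\<delta> * (- ln r) \<le> P * ln (4 * A^2) + 2 * max C0 0"
proof -
  have A2: "1 \<le> 4 * A^2" using one_le_power[OF A_ge_1, of 2] by linarith
  then have P_ln: "0 \<le> P * ln (4 * A^2)" using \<delta> by simp
  show ?thesis
  proof (cases "r < 1 / (4 * A^2)")
    case True
    define c where "c = - ln (2 * A * r)"
    have small: "4 * A^2 * r < 1" using True A2 A_ge_1 by (simp add: less_divide_eq mult.commute)
    have "r \<le> 4 * A^2 * r" using A2 r by (simp add: mult_le_cancel_right1)
    with small have r1: "r < 1" by linarith
    have sq: "(2 * A * r)^2 \<le> 1 * r" using small r by (simp add: power2_eq_square mult_right_mono less_imp_le mult_ac)
    with r1 have "(2 * A * r)^2 < 1" by linarith
    then have "\<bar>2 * A * r\<bar> < 1" by (simp only: abs_square_less_1)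
    then have c0: "0 < c" using r A_ge_1 unfolding c_def by simp
    have \<delta>_le: "\<delta> \<le> max C0 0 / c" unfolding c_def by (rule osc) (rule osc_small_ball[OF r True])
    have "ln ((2 * A * r)^2) \<le> ln r" using sq r A_ge_1 by (subst ln_le_cancel_iff) auto
    then have ln_r: "- ln r \<le> 2 * c" unfolding c_def using r A_ge_1 by (simp add: ln_realpow)
    have "0 \<le> - ln r" using r r1 by simp
    then have "\<delta> * (- ln r) \<le> max C0 0 / c * (2 * c)"
      using \<delta>_le ln_r c0 \<delta> by (intro mult_mono) auto
    also have "\<dots> = 2 * max C0 0" using c0 by simp
    finally show ?thesis using P_ln by linarith
  next
    case False
    then have "ln (1 / (4 * A^2)) \<le> ln r" using A_ge_1 r by (subst ln_le_cancel_iff) auto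
    then have "- ln r \<le> ln (4 * A^2)" using A_ge_1 by (simp add: ln_div)
    then have "\<delta> * (- ln r) \<le> \<delta> * ln (4 * A^2)" using \<delta> by (intro mult_left_mono)
    also have "\<dots> \<le> P * ln (4 * A^2)" using \<delta> A2 by (intro mult_right_mono) auto
    finally show ?thesis by simp
  qed
qed

lemma osc_mul_ln_dist_le:
  assumes r: "0 < r" and near: "2 * A * r < d x x0 + 1" and \<delta>: "0 \<le> \<delta>" "\<delta> \<le> P"
    and osc: "\<And>\<eta>. (\<And>y z. y \<in> qball d x r \<Longrightarrow> z \<in> qball d x r \<Longrightarrow> q y - q z \<le> \<eta>) \<Longrightarrow> \<delta> \<le> \<eta>"
  shows "\<delta> * ln (d x x0 + 1) \<le> P * ln (4 * A + 1) + 2 * max Cinf 0 * (ln (4 * A) + 1)"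
proof -
  define D where "D = d x x0"
  have D0: "0 \<le> D" unfolding D_def by (rule d_nonneg)
  have lnA: "0 \<le> ln (4 * A)" "0 \<le> ln (4 * A + 1)" using A_ge_1 by auto
  then have nonneg: "0 \<le> P * ln (4 * A + 1)" "0 \<le> 2 * max Cinf 0 * (ln (4 * A) + 1)" using \<delta> by auto
  show ?thesis
  proof (cases "D < 4 * A")
    case True
    then have "\<delta> * ln (D + 1) \<le> P * ln (4 * A + 1)" using D0 \<delta> by (intro mult_mono) auto
    then show ?thesis using nonneg unfolding D_def by linarith
  next
    case False
    define L where "L = ln (exp 1 + D / (4 * A))"
    have DA0: "0 \<le> D / (4 * A)" using D0 A_ge_1 by simp
    have L1: "1 \<le> L" unfolding L_def by (rule one_le_ln_exp_1_add[OF DA0])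
    have pinf_close: "\<bar>q y - pinf\<bar> \<le> max Cinf 0 / L" if "y \<in> qball d x r" for y
      using far_ball_close_to_pinf[OF r _ near that] False unfolding L_def D_def by simp
    have \<delta>_le: "\<delta> \<le> 2 * max Cinf 0 / L"
    proof (rule osc)
      fix y z assume "y \<in> qball d x r" "z \<in> qball d x r"
      with pinf_close[of y] pinf_close[of z] show "q y - q z \<le> 2 * max Cinf 0 / L" by arith
    qed
    have "1 \<le> 4 * A * exp 1" using mult_mono[of 1 "4 * A" 1 "exp 1"] A_ge_1 by simp
    then have "D + 1 \<le> 4 * A * (exp 1 + D / (4 * A))" using A_ge_1 by (simp add: field_simps)
    then have "ln (D + 1) \<le> ln (4 * A * (exp 1 + D / (4 * A)))" using D0 by simp
    also have "\<dots> = ln (4 * A) + L"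
      unfolding L_def using A_ge_1 add_pos_nonneg[OF exp_gt_zero[of 1] DA0] by (subst ln_mult) auto
    finally have "ln (D + 1) \<le> ln (4 * A) + L" .
    then have "\<delta> * ln (D + 1) \<le> 2 * max Cinf 0 / L * (ln (4 * A) + L)"
      using \<delta>_le \<delta> D0 by (intro mult_mono) auto
    also have "\<dots> = 2 * max Cinf 0 * (ln (4 * A) / L + 1)" using L1 by (simp add: field_simps)
    also have "\<dots> \<le> 2 * max Cinf 0 * (ln (4 * A) + 1)"
      using L1 lnA by (intro mult_left_mono add_right_mono) (auto simp: divide_le_eq mult_le_cancel_left1)
    finally show ?thesis using nonneg unfolding D_def by linarith
  qed
qed

lemma osc_mul_ln_ratio_bounded:
  obtains G where "\<And>x r \<delta>. 0 < r \<Longrightarrow> 0 \<le> \<delta> \<Longrightarrow> \<delta> \<le> P \<Longrightarrow>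
    (\<And>\<eta>. (\<And>y z. y \<in> qball d x r \<Longrightarrow> z \<in> qball d x r \<Longrightarrow> q y - q z \<le> \<eta>) \<Longrightarrow> \<delta> \<le> \<eta>) \<Longrightarrow>
    \<delta> * ln (1 + A * (d x x0 + 1) / r) \<le> G"
proof
  fix x r \<delta>
  assume r: "0 < r" and \<delta>: "0 \<le> \<delta>" "\<delta> \<le> P"
    and osc: "\<And>\<eta>. (\<And>y z. y \<in> qball d x r \<Longrightarrow> z \<in> qball d x r \<Longrightarrow> q y - q z \<le> \<eta>) \<Longrightarrow> \<delta> \<le> \<eta>"
  define D where "D = d x x0"
  have D0: "0 \<le> D" unfolding D_def by (rule d_nonneg)
  have ratio_ge_1: "1 \<le> 1 + A * (D + 1) / r" using A_ge_1 D0 r by simp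
  consider "D + 1 \<le> 2 * A * r" | "2 * A * r < D + 1" by linarith
  then show "\<delta> * ln (1 + A * (d x x0 + 1) / r) \<le> max (P * ln (1 + 2 * A^2))
      (P * ln (1 + A) + (P * ln (4 * A^2) + 2 * max C0 0)
        + (P * ln (4 * A + 1) + 2 * max Cinf 0 * (ln (4 * A) + 1)))"
  proof cases
    case 1
    then have "A * (D + 1) / r \<le> 2 * A^2"
      using r A_ge_1 by (simp add: divide_le_eq power2_eq_square mult_left_mono mult_ac)
    then have "\<delta> * ln (1 + A * (D + 1) / r) \<le> P * ln (1 + 2 * A^2)"
      using \<delta> ratio_ge_1 by (intro mult_mono) auto
    then show ?thesis unfolding D_def by linarith
  next
    case 2
    have "r \<le> 2 * A * r" using A_ge_1 r by (simp add: mult_le_cancel_right1)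
    with 2 have "r \<le> D + 1" by linarith
    then have "ln (1 + A * (D + 1) / r) \<le> ln (1 + A) + ln (D + 1) - ln r"
      using A_ge_1 D0 r by (intro ln_1_add_mult_div_le) auto
    then have "\<delta> * ln (1 + A * (D + 1) / r) \<le> \<delta> * (ln (1 + A) + ln (D + 1) - ln r)"
      using \<delta>(1) by (rule mult_left_mono)
    then have "\<delta> * ln (1 + A * (D + 1) / r) \<le> \<delta> * ln (1 + A) + \<delta> * ln (D + 1) + \<delta> * (- ln r)"
      by (simp add: algebra_simps)
    moreover have "\<delta> * ln (1 + A) \<le> P * ln (1 + A)" using \<delta> A_ge_1 by (intro mult_right_mono) auto
    moreover have "\<delta> * ln (D + 1) \<le> P * ln (4 * A + 1) + 2 * max Cinf 0 * (ln (4 * A) + 1)"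
      unfolding D_def
    proof (rule osc_mul_ln_dist_le[OF r _ \<delta>])
      show "2 * A * r < d x x0 + 1" using 2 by (simp add: D_def)
    qed (rule osc)
    moreover have "\<delta> * (- ln r) \<le> P * ln (4 * A^2) + 2 * max C0 0"
      by (rule osc_mul_neg_ln_radius_le[OF r \<delta>]) (rule osc)
    ultimately show ?thesis unfolding D_def by linarith
  qed
qed

end

lemma powr_neg_le_exp_if_ge:
  fixes N L \<delta> T :: real
  assumes L: "0 < L" "L \<le> N" and \<delta>: "0 \<le> \<delta>" and T: "- \<delta> * ln L \<le> T"
  shows "N powr (- \<delta>) \<le> exp T"
proof -
  have "N powr (- \<delta>) \<le> L powr (- \<delta>)" using L \<delta> by (intro powr_mono2') auto
  also have "\<dots> = exp (- \<delta> * ln L)" using L by (simp add: powr_def)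
  also have "\<dots> \<le> exp T" using T by simp
  finally show ?thesis .
qed

locale doubling_qmetric_space = qmetric_space d A for d :: "'a \<Rightarrow> 'a \<Rightarrow> real" and A +
  fixes M :: "'a measure" and C :: real
  assumes sets_qball: "\<And>x r. qball d x r \<in> sets M"
    and doubling: "\<And>x r. 0 < r \<Longrightarrow> emeasure M (qball d x (2 * r)) \<le> ennreal C * emeasure M (qball d x r)"
    and C_ge_1: "1 \<le> C"
    and emeasure_qball: "\<And>x r. 0 < r \<Longrightarrow> 0 < emeasure M (qball d x r) \<and> emeasure M (qball d x r) < \<infinity>"

locale Ap_weight =
  fixes d :: "'a \<Rightarrow> 'a \<Rightarrow> real" and M :: "'a measure" and p :: "'a \<Rightarrow> ereal" and w :: "'a \<Rightarrow> real"
    and K :: real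
  assumes w_measurable: "w \<in> borel_measurable M" and w_nonneg: "\<And>x. 0 \<le> w x"
    and w_pos: "AE x in M. 0 < w x"
    and K_pos: "0 < K"
    and Ap: "\<And>x r. 0 < r \<Longrightarrow>
      vnorm M p (\<lambda>y. w y * indicator (qball d x r) y)
        * vnorm M (conj_exp p) (\<lambda>y. inverse (w y) * indicator (qball d x r) y)
      \<le> ennreal K * emeasure M (qball d x r)"

locale weighted_log_hoelder_space =
  doubling_qmetric_space d A M C + log_hoelder_exponent d A q C0 Cinf pinf x0 + Ap_weight d M p w K
  for d :: "'a \<Rightarrow> 'a \<Rightarrow> real" and A M C q C0 Cinf pinf x0 p w K +
  assumes p_eq: "\<And>x. p x = ereal (q x)" and q_ge_1: "\<And>x. 1 \<le> q x"
    and q_measurable: "q \<in> borel_measurable M"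
begin

lemma p_ge_1: "1 \<le> p x"
  using q_ge_1[of x] by (simp add: p_eq)

lemma p_finite: "p x \<noteq> \<infinity>"
  by (simp add: p_eq)

lemma p_measurable: "p \<in> borel_measurable M"
  unfolding p_eq[abs_def] using q_measurable by measurable

definition outer_radius :: "'a \<Rightarrow> real \<Rightarrow> real" where
  "outer_radius x r = A * (d x x0 + 1) + r"

lemma radius_le_outer_radius: "r \<le> outer_radius x r"
  unfolding outer_radius_def using A_ge_1 d_nonneg[of x x0] by simp

lemma unit_ball_subset_outer_ball:
  assumes "0 < r"
  shows "qball d x0 1 \<subseteq> qball d x (outer_radius x r)"
proof
  fix y assume "y \<in> qball d x0 1"
  then have "d x0 y < 1" by (simp add: qball_def)
  then have "A * (d x x0 + d x0 y) < A * (d x x0 + 1)" using A_ge_1 by simp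
  then show "y \<in> qball d x (outer_radius x r)"
    using quasi_triangle[of x y x0] assms unfolding qball_def outer_radius_def by simp
qed

lemma vnorm_weight_ball_lower_bound:
  obtains c where "0 < c" and "\<And>x r. 0 < r \<Longrightarrow> vnorm M p (\<lambda>y. w y * indicator (qball d x r) y) < \<infinity> \<Longrightarrow>
    c * measure M (qball d x r) / measure M (qball d x (outer_radius x r))
      \<le> enn2real (vnorm M p (\<lambda>y. w y * indicator (qball d x r) y))"
proof -
  have "vnorm M p (\<lambda>y. w y * indicator (qball d x0 1) y) \<noteq> 0"
    using emeasure_qball[of 1 x0] sets_qball
    by (intro vnorm_weight_indicator_nonzero p_ge_1 p_finite p_measurable w_measurable w_nonneg w_pos) auto
  then obtain \<eta> where \<eta>: "0 < \<eta>" "ennreal \<eta> \<le> vnorm M p (\<lambda>y. w y * indicator (qball d x0 1) y)"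
  proof (cases "vnorm M p (\<lambda>y. w y * indicator (qball d x0 1) y)")
    case (real n)
    with that[of n] show ?thesis using \<open>_ \<noteq> 0\<close> by auto
  qed (use that[of 1] in auto)
  show ?thesis
  proof
    show "0 < \<eta> / (4 * K)" using \<eta> K_pos by simp
    fix x r assume r: "0 < r" and fin: "vnorm M p (\<lambda>y. w y * indicator (qball d x r) y) < \<infinity>"
    let ?B' = "qball d x (outer_radius x r)"
    have R: "0 < outer_radius x r" using r radius_le_outer_radius[of r x] by linarith
    have "ennreal \<eta> \<le> vnorm M p (\<lambda>y. w y * indicator ?B' y)"
      using \<eta>(2) unit_ball_subset_outer_ball[OF r] w_nonneg
      by (elim order_trans, intro vnorm_mono p_ge_1) (auto simp: indicator_def)
    with \<eta>(1) have "\<eta> * measure M (qball d x r) / (4 * K * measure M ?B')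
        \<le> enn2real (vnorm M p (\<lambda>y. w y * indicator (qball d x r) y))"
      using emeasure_qball[OF R, of x] sets_qball qball_mono[OF radius_le_outer_radius, of d x r x] K_pos Ap[OF R, of x] fin
      by (intro vnorm_weight_indicator_lower_bound[OF p_ge_1 p_finite p_measurable w_measurable w_pos]) auto
    then show "\<eta> / (4 * K) * measure M (qball d x r) / measure M ?B'
        \<le> enn2real (vnorm M p (\<lambda>y. w y * indicator (qball d x r) y))"
      by (simp add: field_simps)
  qed
qed

lemma p_minus_p_plus_ball_bounds:
  assumes r: "0 < r"
  shows "0 \<le> real_of_ereal (p_plus M p (qball d x r)) - real_of_ereal (p_minus M p (qball d x r))"
    and "real_of_ereal (p_plus M p (qball d x r)) - real_of_ereal (p_minus M p (qball d x r))
      \<le> pinf + max Cinf 0"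
    and "\<And>\<eta>. (\<And>y z. y \<in> qball d x r \<Longrightarrow> z \<in> qball d x r \<Longrightarrow> q y - q z \<le> \<eta>) \<Longrightarrow>
      real_of_ereal (p_plus M p (qball d x r)) - real_of_ereal (p_minus M p (qball d x r)) \<le> \<eta>"
proof -
  have "emeasure M (qball d x r) \<noteq> 0" using emeasure_qball[OF r, of x] by auto
  note bounds = p_minus_p_plus_bounds[where p = p and q = q and E = "qball d x r" and M = M,
      OF p_eq q_ge_1 q_le sets_qball this]
  show "0 \<le> real_of_ereal (p_plus M p (qball d x r)) - real_of_ereal (p_minus M p (qball d x r))"
    using bounds(2) by simp
  show "real_of_ereal (p_plus M p (qball d x r)) - real_of_ereal (p_minus M p (qball d x r))
      \<le> pinf + max Cinf 0"
    using bounds(1,3) by simp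
  show "\<And>\<eta>. (\<And>y z. y \<in> qball d x r \<Longrightarrow> z \<in> qball d x r \<Longrightarrow> q y - q z \<le> \<eta>) \<Longrightarrow>
      real_of_ereal (p_plus M p (qball d x r)) - real_of_ereal (p_minus M p (qball d x r)) \<le> \<eta>"
    by (rule bounds(4))
qed

lemma osc_mul_ln_measure_ratio_bounded:
  obtains G where "\<And>x r. 0 < r \<Longrightarrow>
    (real_of_ereal (p_plus M p (qball d x r)) - real_of_ereal (p_minus M p (qball d x r)))
      * ln (measure M (qball d x (outer_radius x r)) / measure M (qball d x r)) \<le> G"
proof -
  define P where "P = pinf + max Cinf 0"
  have "0 \<le> P" unfolding P_def using q_ge_1[of x0] q_le[of x0] by linarith
  then obtain G where G: "\<And>x r \<delta>. 0 < r \<Longrightarrow> 0 \<le> \<delta> \<Longrightarrow> \<delta> \<le> P \<Longrightarrow>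
      (\<And>\<eta>. (\<And>y z. y \<in> qball d x r \<Longrightarrow> z \<in> qball d x r \<Longrightarrow> q y - q z \<le> \<eta>) \<Longrightarrow> \<delta> \<le> \<eta>) \<Longrightarrow>
      \<delta> * ln (1 + A * (d x x0 + 1) / r) \<le> G"
    using osc_mul_ln_ratio_bounded by blast
  show ?thesis
  proof (rule that[of "ln C * (P + G / ln 2)"])
    fix x and r :: real
    assume r: "0 < r"
    define \<delta> where "\<delta> = real_of_ereal (p_plus M p (qball d x r)) - real_of_ereal (p_minus M p (qball d x r))"
    have \<delta>: "0 \<le> \<delta>" "\<delta> \<le> P" using p_minus_p_plus_ball_bounds(1,2)[OF r] unfolding \<delta>_def P_def by auto
    have "outer_radius x r / r = 1 + A * (d x x0 + 1) / r"
      unfolding outer_radius_def using r by (simp add: field_simps)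
    then have osc_ln: "\<delta> * ln (outer_radius x r / r) \<le> G"
      using G[OF r \<delta>] p_minus_p_plus_ball_bounds(3)[OF r] unfolding \<delta>_def by simp
    have "\<delta> * ln (measure M (qball d x (outer_radius x r)) / measure M (qball d x r))
        \<le> \<delta> * (ln C * (1 + log 2 (outer_radius x r / r)))"
      using \<delta> ln_measure_qball_ratio_le[OF doubling C_ge_1 emeasure_qball sets_qball r radius_le_outer_radius]
      by (intro mult_left_mono)
    also have "\<dots> = ln C * (\<delta> + \<delta> * ln (outer_radius x r / r) / ln 2)"
      by (simp add: log_def algebra_simps)
    also have "\<dots> \<le> ln C * (P + G / ln 2)"
      using C_ge_1 \<delta> osc_ln by (intro mult_left_mono add_mono divide_right_mono) auto
    finally show "(real_of_ereal (p_plus M p (qball d x r)) - real_of_ereal (p_minus M p (qball d x r)))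
      * ln (measure M (qball d x (outer_radius x r)) / measure M (qball d x r)) \<le> ln C * (P + G / ln 2)"
      unfolding \<delta>_def .
  qed
qed

lemma vnorm_weight_ball_powr_bounded:
  "\<exists>C0::real. \<forall>x r. 0 < r \<longrightarrow>
     enn2real (vnorm M p (\<lambda>y. w y * indicator (qball d x r) y))
       powr (real_of_ereal (p_minus M p (qball d x r)) - real_of_ereal (p_plus M p (qball d x r)))
     \<le> C0"
proof -
  obtain c where c: "0 < c" and lower: "\<And>x r. 0 < r \<Longrightarrow> vnorm M p (\<lambda>y. w y * indicator (qball d x r) y) < \<infinity> \<Longrightarrow>
      c * measure M (qball d x r) / measure M (qball d x (outer_radius x r))
        \<le> enn2real (vnorm M p (\<lambda>y. w y * indicator (qball d x r) y))"
    using vnorm_weight_ball_lower_bound by blast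
  obtain G where G: "\<And>x r. 0 < r \<Longrightarrow>
      (real_of_ereal (p_plus M p (qball d x r)) - real_of_ereal (p_minus M p (qball d x r)))
        * ln (measure M (qball d x (outer_radius x r)) / measure M (qball d x r)) \<le> G"
    using osc_mul_ln_measure_ratio_bounded by blast
  define P where "P = pinf + max Cinf 0"
  have "enn2real (vnorm M p (\<lambda>y. w y * indicator (qball d x r) y))
       powr (real_of_ereal (p_minus M p (qball d x r)) - real_of_ereal (p_plus M p (qball d x r)))
     \<le> exp (P * \<bar>ln c\<bar> + G)" if r: "0 < r" for x r
  proof -
    define V where "V = vnorm M p (\<lambda>y. w y * indicator (qball d x r) y)"
    define \<delta> where "\<delta> = real_of_ereal (p_plus M p (qball d x r)) - real_of_ereal (p_minus M p (qball d x r))"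
    define m where "m = measure M (qball d x r)"
    define m' where "m' = measure M (qball d x (outer_radius x r))"
    have \<delta>: "0 \<le> \<delta>" "\<delta> \<le> P" unfolding \<delta>_def P_def using p_minus_p_plus_ball_bounds(1,2)[OF r] by auto
    have "enn2real V powr (- \<delta>) \<le> exp (P * \<bar>ln c\<bar> + G)"
    proof (cases "V < \<infinity>")
      case True
      have R: "0 < outer_radius x r" using r radius_le_outer_radius[of r x] by linarith
      have m: "0 < m" "0 < m'" unfolding m_def m'_def
        using emeasure_qball[OF r, of x] emeasure_qball[OF R, of x]
        by (auto simp: measure_def enn2real_positive_iff less_top)
      have "- \<delta> * ln (c * m / m') = \<delta> * (- ln c) + \<delta> * ln (m' / m)"
        using c m by (simp add: ln_mult ln_div algebra_simps)
      also have "\<dots> \<le> \<delta> * \<bar>ln c\<bar> + G"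
        using \<delta> G[OF r] unfolding \<delta>_def m_def m'_def by (intro add_mono mult_left_mono) auto
      also have "\<dots> \<le> P * \<bar>ln c\<bar> + G" using \<delta> by (intro add_right_mono mult_right_mono) auto
      finally show ?thesis
        using lower[OF r True[unfolded V_def]] c m \<delta> unfolding V_def m_def m'_def
        by (intro powr_neg_le_exp_if_ge) auto
    qed (simp add: less_top[symmetric]) \<comment> \<open>an infinite norm becomes 0 under enn2real, and 0 powr _ = 0\<close>
    then show ?thesis unfolding V_def \<delta>_def by simp
  qed
  then show ?thesis by blast
qed

end

lemma homogeneous_typeE:
  assumes "homogeneous_type d M"
  obtains A C where "doubling_qmetric_space d A M C"
proof -
  from assms have qm: "quasi_metric d"
    and sets: "sets M = sigma_sets UNIV ({qball d x r | x r. True} \<union> {U. qopen d U})"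
    and "\<exists>C\<mu>::real. \<forall>x r. r > 0 \<longrightarrow> 0 < emeasure M (qball d x (2 * r)) \<and>
        emeasure M (qball d x (2 * r)) \<le> ennreal C\<mu> * emeasure M (qball d x r) \<and>
        emeasure M (qball d x r) < \<infinity>"
    unfolding homogeneous_type_def by auto
  then obtain C\<mu> :: real where C\<mu>: "\<And>x r. r > 0 \<Longrightarrow> 0 < emeasure M (qball d x (2 * r)) \<and>
      emeasure M (qball d x (2 * r)) \<le> ennreal C\<mu> * emeasure M (qball d x r) \<and>
      emeasure M (qball d x r) < \<infinity>"
    by blast
  from qm obtain A where A: "1 \<le> A" "\<And>x y z. d x y \<le> A * (d x z + d z y)"
    and d: "\<And>x y. 0 \<le> d x y" "\<And>x y. d x y = 0 \<longleftrightarrow> x = y" "\<And>x y. d x y = d y x"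
    unfolding quasi_metric_def by blast
  show ?thesis
  proof (rule that[of A "max C\<mu> 1"], unfold_locales)
    show "qball d x r \<in> sets M" for x r unfolding sets by (rule sigma_sets.Basic) auto
    show "emeasure M (qball d x (2 * r)) \<le> ennreal (max C\<mu> 1) * emeasure M (qball d x r)" if "0 < r" for x r
      using C\<mu>[OF that, of x] by (elim conjE order_trans, intro mult_right_mono ennreal_leI) auto
    show "0 < emeasure M (qball d x r) \<and> emeasure M (qball d x r) < \<infinity>" if "0 < r" for x r
      using C\<mu>[of "r / 2" x] C\<mu>[of r x] that by simp
  qed (use A d in auto)
qed

lemma exponent_LH_realE:
  assumes "qmetric_space d A" and "exponent M p" and "LH d p"
  obtains q C0 Cinf pinf x0 where "log_hoelder_exponent d A q C0 Cinf pinf x0"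
    and "\<And>x. p x = ereal (q x)" and "\<And>x. 1 \<le> q x" and "q \<in> borel_measurable M"
proof -
  from assms(2,3) obtain C0 x0 Cinf pinf where p: "p \<in> borel_measurable M" "\<And>x. 1 \<le> p x"
    and LH0: "\<And>x y. 0 < d x y \<and> d x y < 1/2 \<Longrightarrow> \<bar>p x - p y\<bar> < ereal (- C0 / ln (d x y))"
    and LHinf: "\<And>x. \<bar>p x - ereal pinf\<bar> < ereal (Cinf / ln (exp 1 + d x x0))"
    unfolding exponent_def LH_def LH0_def LHinf_def by metis
  define q where "q x = real_of_ereal (p x)" for x
  have pq: "p x = ereal (q x)" for x \<comment> \<open>LH_inf forces p to be finite\<close>
    using p(2)[of x] LHinf[of x] unfolding q_def by (cases "p x") auto
  show ?thesis
  proof (rule that[of q C0 Cinf pinf x0])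
    show "log_hoelder_exponent d A q C0 Cinf pinf x0"
      using assms(1) LH0 LHinf by (auto simp: log_hoelder_exponent_def log_hoelder_exponent_axioms_def pq)
    show "q \<in> borel_measurable M" unfolding q_def using p(1) by measurable
  qed (use p(2) in \<open>auto simp: pq\<close>)
qed

lemma Ap_varE:
  assumes "Ap_var d M p w"
  obtains K where "Ap_weight d M p w K"
proof -
  from assms obtain K where w: "w \<in> borel_measurable M" "\<And>x. 0 \<le> w x" "AE x in M. 0 < w x"
    and K: "\<And>x r. 0 < r \<Longrightarrow>
      vnorm M p (\<lambda>y. w y * indicator (qball d x r) y)
        * vnorm M (conj_exp p) (\<lambda>y. inverse (w y) * indicator (qball d x r) y)
      \<le> ennreal K * emeasure M (qball d x r)"
    unfolding Ap_var_def weight_def by metis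
  show ?thesis
  proof (rule that[of "max K 1"], unfold_locales)
    show "vnorm M p (\<lambda>y. w y * indicator (qball d x r) y)
        * vnorm M (conj_exp p) (\<lambda>y. inverse (w y) * indicator (qball d x r) y)
      \<le> ennreal (max K 1) * emeasure M (qball d x r)" if "0 < r" for x r
      using K[OF that, of x] by (elim order_trans, intro mult_right_mono ennreal_leI) auto
  qed (use w in auto)
qed

theorem lemma3p3:
  fixes d :: "'a \<Rightarrow> 'a \<Rightarrow> real" and M :: "'a measure"
    and p :: "'a \<Rightarrow> ereal" and w :: "'a \<Rightarrow> real"
  assumes "homogeneous_type d M"
    and "exponent M p" and "LH d p"
    and "Ap_var d M p w"
  shows "\<exists>C0::real. \<forall>x r. 0 < r \<longrightarrow>
     enn2real (vnorm M p (\<lambda>y. w y * indicator (qball d x r) y))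
       powr (real_of_ereal (p_minus M p (qball d x r)) - real_of_ereal (p_plus M p (qball d x r)))
     \<le> C0"
proof -
  obtain A C where doubling_space: "doubling_qmetric_space d A M C" using assms(1) by (rule homogeneous_typeE)
  then interpret doubling_qmetric_space d A M C .
  obtain q C0 Cinf pinf x0 where log_hoelder: "log_hoelder_exponent d A q C0 Cinf pinf x0"
    and q: "\<And>x. p x = ereal (q x)" "\<And>x. 1 \<le> q x" "q \<in> borel_measurable M"
    using exponent_LH_realE[OF qmetric_space_axioms assms(2,3)] by blast
  obtain K where Ap: "Ap_weight d M p w K" using assms(4) by (rule Ap_varE)
  interpret weighted_log_hoelder_space d A M C q C0 Cinf pinf x0 p w K
    by (intro weighted_log_hoelder_space.intro weighted_log_hoelder_space_axioms.intro
        doubling_space log_hoelder Ap q)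
  show ?thesis by (rule vnorm_weight_ball_powr_bounded)
qed

end
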